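(* Every $(F,G)\in\mathcal F^{(1)}$ is a $1$-uniform dual pair; that is, $\langle f_i,g_i\rangle=\frac nN$ for all $1\le i\le N$.
   Context: $\mathcal H$ is a complex Hilbert space of finite dimension $n$, inner product linear in the first argument. A finite sequence $F=\{f_i\}_{i=1}^N$ in $\mathcal H$ is a frame if there are constants $0<A\le B$ with $A\|f\|^2\le\sum_{i=1}^N|\langle f,f_i\rangle|^2\le B\|f\|^2$ for all $f$. A sequence $G=\{g_i\}_{i=1}^N$ is a dual of $F$ if $f=\sum_{i=1}^N\langle f,g_i\rangle f_i$ for all $f$; then $(F,G)$ is an $(N,n)$ dual pair. A dual pair is $1$-uniform if $\langle f_i,g_i\rangle$ is independent of $i$. The error operator for $\Lambda\subseteq\{1,\dots,N\}$ is $E_{\Lambda,F,G}f=\sum_{i\in\Lambda}\langle f,f_i\rangle g_i$. With $\|T\|_{\mathcal F}=\sqrt{\operatorname{tr}(T^*T)}$, $\epsilon^{(1)}_{F,G}=\max_{1\le i\le N}\|E_{\{i\},F,G}\|_{\mathcal F}$, $\epsilon^{(1)}=\inf\{\epsilon^{(1)}_{F,G}:(F,G)\text{ an }(N,n)\text{ dual pair}\}$, $\mathcal F^{(1)}=\{(F,G):\epsilon^{(1)}_{F,G}=\epsilon^{(1)}\}$. *)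

theory Defs
  imports "HOL-Analysis.Analysis"
begin

text \<open>The n-dimensional complex Hilbert space is modelled as complex^'n with CARD('n) = n,
  with the standard inner product, linear in the first argument.\<close>

definition cinner :: "complex^'n \<Rightarrow> complex^'n \<Rightarrow> complex" where
  "cinner x y = (\<Sum>j\<in>UNIV. x$j * cnj (y$j))"

definition hnorm :: "complex^'n \<Rightarrow> real" where
  "hnorm x = sqrt (Re (cinner x x))"

definition is_frame :: "nat \<Rightarrow> (nat \<Rightarrow> complex^'n) \<Rightarrow> bool" where
  "is_frame N F \<longleftrightarrow> (\<exists>A B. 0 < A \<and> A \<le> B \<and>
     (\<forall>f. A * (hnorm f)^2 \<le> (\<Sum>i=1..N. (cmod (cinner f (F i)))^2) \<and>
          (\<Sum>i=1..N. (cmod (cinner f (F i)))^2) \<le> B * (hnorm f)^2))"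

definition is_dual :: "nat \<Rightarrow> (nat \<Rightarrow> complex^'n) \<Rightarrow> (nat \<Rightarrow> complex^'n) \<Rightarrow> bool" where
  "is_dual N F G \<longleftrightarrow> (\<forall>f. f = (\<Sum>i=1..N. cinner f (G i) *s F i))"

definition dual_pair :: "nat \<Rightarrow> (nat \<Rightarrow> complex^'n) \<Rightarrow> (nat \<Rightarrow> complex^'n) \<Rightarrow> bool" where
  "dual_pair N F G \<longleftrightarrow> is_frame N F \<and> is_dual N F G"

definition uniform1 :: "nat \<Rightarrow> (nat \<Rightarrow> complex^'n) \<Rightarrow> (nat \<Rightarrow> complex^'n) \<Rightarrow> bool" where
  "uniform1 N F G \<longleftrightarrow> (\<forall>i\<in>{1..N}. \<forall>j\<in>{1..N}. cinner (F i) (G i) = cinner (F j) (G j))"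

definition err_op :: "(nat \<Rightarrow> complex^'n) \<Rightarrow> (nat \<Rightarrow> complex^'n) \<Rightarrow> nat set \<Rightarrow> complex^'n \<Rightarrow> complex^'n" where
  "err_op F G \<Lambda> f = (\<Sum>i\<in>\<Lambda>. cinner f (F i) *s G i)"

definition conj_transpose :: "complex^'m^'n \<Rightarrow> complex^'n^'m" where
  "conj_transpose M = (\<chi> i j. cnj (M$j$i))"

text \<open>Frobenius norm sqrt(tr(T* T)), computed on the matrix of T in the standard (orthonormal) basis\<close>
definition frob_norm :: "(complex^'n \<Rightarrow> complex^'n) \<Rightarrow> real" where
  "frob_norm T = sqrt (Re (trace (conj_transpose (matrix T) ** matrix T)))"

definition eps1_pair :: "nat \<Rightarrow> (nat \<Rightarrow> complex^'n) \<Rightarrow> (nat \<Rightarrow> complex^'n) \<Rightarrow> real" where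
  "eps1_pair N F G = Max ((\<lambda>i. frob_norm (err_op F G {i})) ` {1..N})"

definition eps1 :: "nat \<Rightarrow> 'n::finite itself \<Rightarrow> real" where
  "eps1 N _ = Inf {eps1_pair N F G | F (G :: nat \<Rightarrow> complex^'n). dual_pair N F G}"

definition optF1 :: "nat \<Rightarrow> 'n::finite itself \<Rightarrow> ((nat \<Rightarrow> complex^'n) \<times> (nat \<Rightarrow> complex^'n)) set" where
  "optF1 N _ = {(F, G). dual_pair N F G \<and> eps1_pair N F G = eps1 N TYPE('n)}"

end

theory Submission
  imports Defs
begin

text \<open>By Cauchy--Schwarz, \<open>|\<langle>f\<^sub>i, g\<^sub>i\<rangle>| \<le> \<parallel>f\<^sub>i\<parallel> \<parallel>g\<^sub>i\<parallel>\<close>, and \<open>\<parallel>f\<^sub>i\<parallel> \<parallel>g\<^sub>i\<parallel>\<close> is the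
  Frobenius norm of the rank-one error operator \<open>E\<^bsub>{i}\<^esub>\<close>, hence at most \<open>\<epsilon>\<^sub>F\<^sub>,\<^sub>G\<close>.
  The harmonic frame (rows of the normalised \<open>N \<times> N\<close> Fourier matrix restricted to \<open>n\<close>
  columns) is a Parseval frame with all \<open>\<parallel>f\<^sub>i\<parallel>\<^sup>2 = n/N\<close>, so for an optimal pair
  \<open>|\<langle>f\<^sub>i, g\<^sub>i\<rangle>| \<le> n/N\<close> for every \<open>i\<close>. On the other hand \<open>\<Sum>\<^sub>i \<langle>f\<^sub>i, g\<^sub>i\<rangle> = tr(id) = n\<close>, and
  \<open>N\<close> complex numbers of modulus at most \<open>n/N\<close> can only sum to \<open>n\<close> if each equals \<open>n/N\<close>.\<close>

lemma Re_cinner_self: "Re (cinner x x) = (\<Sum>j\<in>UNIV. (cmod (x$j))^2)"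
  unfolding cinner_def by (simp add: complex_mult_cnj cmod_def power2_eq_square Re_sum)

lemma hnorm_eq_norm_cmod: "hnorm x = norm (\<chi> j. cmod (x$j))"
  unfolding hnorm_def norm_vec_def L2_set_def Re_cinner_self by simp

lemma hnorm_power2: "(hnorm x)^2 = (\<Sum>j\<in>UNIV. (cmod (x$j))^2)"
  unfolding hnorm_def Re_cinner_self by (simp add: sum_nonneg)

lemma hnorm_nonneg: "0 \<le> hnorm x"
  by (simp add: hnorm_eq_norm_cmod)

lemma cmod_cinner_le: "cmod (cinner x y) \<le> hnorm x * hnorm y"
proof -
  have "cmod (cinner x y) \<le> (\<Sum>j\<in>UNIV. cmod (x$j) * cmod (y$j))"
    unfolding cinner_def by (rule order_trans[OF norm_sum]) (simp add: norm_mult)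
  also have "\<dots> = (\<chi> j. cmod (x$j)) \<bullet> (\<chi> j. cmod (y$j))"
    by (simp add: inner_vec_def)
  also have "\<dots> \<le> hnorm x * hnorm y"
    unfolding hnorm_eq_norm_cmod by (rule norm_cauchy_schwarz)
  finally show ?thesis .
qed

lemma cinner_axis_left: "cinner (axis k 1) y = cnj (y $ k)"
proof -
  have "(\<Sum>j\<in>UNIV. (if j = k then 1 else 0) * cnj (y $ j)) = cnj (y $ k)"
    by (simp add: if_distrib[of "\<lambda>x. x * _"] cong: if_cong)
  thus ?thesis by (simp add: cinner_def axis_def)
qed

lemma cinner_commute: "cinner y x = cnj (cinner x y)"
  unfolding cinner_def by (simp add: mult.commute)

lemma cinner_sum_left: "cinner (\<Sum>i\<in>I. c i *s v i) y = (\<Sum>i\<in>I. c i * cinner (v i) y)"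
  unfolding cinner_def
  by (simp add: sum_component sum_distrib_left sum_distrib_right mult_ac sum.swap[of _ I])

lemma of_real_cmod_power2: "(complex_of_real (cmod a))^2 = a * cnj a"
  by (subst of_real_power[symmetric], rule complex_norm_square)

lemma eq_of_sum_eq_card_mult_bound:
  fixes z :: "'a \<Rightarrow> complex"
  assumes "finite A"
    and sum: "(\<Sum>i\<in>A. z i) = of_real (real (card A) * c)"
    and bound: "\<And>i. i \<in> A \<Longrightarrow> cmod (z i) \<le> c"
    and i: "i \<in> A"
  shows "z i = of_real c"
proof -
  have "(\<Sum>i\<in>A. c - Re (z i)) = 0"
    using arg_cong[OF sum, of Re] by (simp add: Re_sum sum_subtractf)
  moreover have "Re (z i) \<le> c" if "i \<in> A" for i
    using bound[OF that] complex_Re_le_cmod order_trans by blast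
  ultimately have Re_eq: "Re (z i) = c"
    using sum_nonneg_eq_0_iff[of A "\<lambda>i. c - Re (z i)"] \<open>finite A\<close> i by auto
  have "(cmod (z i))^2 \<le> (Re (z i))^2"
    using bound[OF i] Re_eq by (intro power_mono) auto
  hence "Im (z i) = 0"
    unfolding cmod_power2 by simp
  thus ?thesis
    using Re_eq by (simp add: complex_eq_iff)
qed

subsection \<open>Single-coefficient error operators\<close>

lemma matrix_err_op_singleton: "matrix (err_op F G {i}) $ r $ c = cnj (F i $ c) * G i $ r"
  by (simp add: matrix_def err_op_def cinner_axis_left)

lemma frob_norm_err_op_singleton: "frob_norm (err_op F G {i}) = hnorm (F i) * hnorm (G i)"
proof -
  let ?T = "conj_transpose (matrix (err_op F G {i})) ** matrix (err_op F G {i})"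
  have "trace ?T = (\<Sum>c\<in>UNIV. \<Sum>r\<in>UNIV. of_real ((cmod (F i $ c))^2 * (cmod (G i $ r))^2))"
    unfolding trace_def conj_transpose_def matrix_matrix_mult_def
    by (auto simp: matrix_err_op_singleton of_real_cmod_power2 mult_ac intro!: sum.cong)
  hence "Re (trace ?T) = (\<Sum>c\<in>UNIV. (cmod (F i $ c))^2) * (\<Sum>r\<in>UNIV. (cmod (G i $ r))^2)"
    by (simp add: Re_sum sum_product)
  also have "\<dots> = (hnorm (F i) * hnorm (G i))^2"
    by (simp add: hnorm_power2 power_mult_distrib)
  finally show ?thesis
    unfolding frob_norm_def by (simp add: hnorm_nonneg)
qed

lemma cmod_cinner_le_eps1_pair:
  assumes "i \<in> {1..N}"
  shows "cmod (cinner (F i) (G i)) \<le> eps1_pair N F G"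
proof -
  have "cmod (cinner (F i) (G i)) \<le> frob_norm (err_op F G {i})"
    by (simp add: frob_norm_err_op_singleton cmod_cinner_le)
  also have "\<dots> \<le> eps1_pair N F G"
    unfolding eps1_pair_def using assms by (intro Max_ge) auto
  finally show ?thesis .
qed

lemma dual_sum_cinner:
  fixes F G :: "nat \<Rightarrow> complex^'n::finite"
  assumes "is_dual N F G"
  shows "(\<Sum>i=1..N. cinner (F i) (G i)) = of_nat CARD('n)"
proof -
  have diagonal: "(\<Sum>i=1..N. cnj (G i $ k) * F i $ k) = 1" for k :: 'n
  proof -
    have "axis k 1 = (\<Sum>i=1..N. cinner (axis k 1) (G i) *s F i)"
      using assms unfolding is_dual_def by blast
    hence "(axis k (1::complex)) $ k = (\<Sum>i=1..N. cinner (axis k 1) (G i) *s F i) $ k"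
      by simp
    thus ?thesis by (simp add: sum_component cinner_axis_left)
  qed
  have "(\<Sum>i=1..N. cinner (F i) (G i)) = (\<Sum>k\<in>UNIV. \<Sum>i=1..N. cnj (G i $ k) * F i $ k)"
    unfolding cinner_def by (subst sum.swap) (simp add: mult_ac)
  also have "\<dots> = of_nat CARD('n)"
    by (simp only: diagonal) simp
  finally show ?thesis .
qed

lemma dual_card_le:
  assumes "is_dual N (F :: nat \<Rightarrow> complex^'n::finite) G"
  shows "CARD('n) \<le> N"
proof -
  have "UNIV \<subseteq> vec.span (F ` {1..N})"
  proof
    fix f :: "complex^'n"
    have "f = (\<Sum>i=1..N. cinner f (G i) *s F i)"
      using assms unfolding is_dual_def by blast
    also have "\<dots> \<in> vec.span (F ` {1..N})"
      by (intro vec.span_sum vec.span_scale vec.span_base) auto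
    finally show "f \<in> vec.span (F ` {1..N})" .
  qed
  hence "vec.dim (UNIV :: (complex^'n) set) \<le> card (F ` {1..N})"
    by (intro vec.dim_le_card) auto
  also have "\<dots> \<le> N"
    using card_image_le[of "{1..N}" F] by simp
  finally show ?thesis
    unfolding vec_dim_card .
qed

lemma dual_pos:
  assumes "is_dual N (F :: nat \<Rightarrow> complex^'n::finite) G"
  shows "0 < N"
  using dual_card_le[OF assms] zero_less_card_finite[where 'a='n] by linarith

lemma dual_Parseval:
  assumes "is_dual N F F"
  shows "(\<Sum>i=1..N. (cmod (cinner f (F i)))^2) = (hnorm f)^2"
proof -
  have "(hnorm f)^2 = Re (cinner f f)"
    unfolding hnorm_def using Re_cinner_self[of f] by (simp add: sum_nonneg)
  also have "cinner f f = cinner (\<Sum>i=1..N. cinner f (F i) *s F i) f"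
    using assms unfolding is_dual_def by metis
  also have "\<dots> = (\<Sum>i=1..N. complex_of_real ((cmod (cinner f (F i)))^2))"
    unfolding cinner_sum_left by (simp add: cinner_commute[of "F _" f] of_real_cmod_power2)
  finally show ?thesis
    by (simp add: Re_sum)
qed

lemma self_dual_imp_dual_pair:
  assumes "is_dual N F F"
  shows "dual_pair N F F"
  unfolding dual_pair_def is_frame_def
  using assms dual_Parseval[OF assms] by (intro conjI exI[of _ 1]) simp_all

subsection \<open>Roots of unity\<close>

lemma exp_ii_power: "exp (\<i> * complex_of_real x) ^ i = exp (\<i> * complex_of_real (real i * x))"
proof -
  have "\<i> * complex_of_real (real i * x) = of_nat i * (\<i> * complex_of_real x)"
    by simp
  thus ?thesis
    by (simp only: exp_of_nat_mult)
qed

lemma sum_root_of_unity_powers_eq_0: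
  fixes d :: int
  assumes N: "0 < N" and not_dvd: "\<not> int N dvd d"
  shows "(\<Sum>i=1..N. exp (\<i> * complex_of_real (2*pi*real_of_int d / real N))^i) = 0"
proof -
  define r where "r = exp (\<i> * complex_of_real (2*pi*real_of_int d / real N))"
  have "r ^ N = exp (\<i> * complex_of_real (real N * (2*pi*real_of_int d / real N)))"
    unfolding r_def exp_ii_power ..
  also have "real N * (2*pi*real_of_int d / real N) = of_int (2 * d) * pi"
    using N by simp
  also have "exp (\<i> * complex_of_real (of_int (2 * d) * pi)) = 1"
    by (auto simp: exp_eq_1 intro!: exI[of _ d])
  finally have r_power_N: "r ^ N = 1" .
  have r_neq_1: "r \<noteq> 1"
  proof
    assume "r = 1"
    then obtain k :: int where "2*pi*real_of_int d / real N = of_int (2 * k) * pi"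
      unfolding r_def exp_eq_1 by auto
    hence "real_of_int d = real_of_int (int N * k)"
      using N by (simp add: field_simps)
    hence "d = int N * k"
      by linarith
    thus False
      using not_dvd by simp
  qed
  have "(\<Sum>i=1..N. r^i) = r * (\<Sum>i<N. r^i)"
    by (induct N) (simp_all add: algebra_simps)
  also have "(\<Sum>i<N. r^i) = 0"
    using geometric_sum[OF r_neq_1, of N] r_power_N by simp
  finally show ?thesis
    unfolding r_def by simp
qed

definition fourier_phase :: "nat \<Rightarrow> nat \<Rightarrow> nat \<Rightarrow> complex" where
  "fourier_phase N i a = exp (\<i> * complex_of_real (2*pi*real i * real a / real N))"

lemma cmod_fourier_phase: "cmod (fourier_phase N i a) = 1"
  unfolding fourier_phase_def by (simp add: mult.commute[of \<i>])

lemma fourier_phase_mult_cnj: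
  "fourier_phase N i a * cnj (fourier_phase N i b) =
     exp (\<i> * complex_of_real (2*pi*real_of_int (int a - int b) / real N)) ^ i"
proof -
  have "fourier_phase N i a * cnj (fourier_phase N i b)
      = exp (\<i> * complex_of_real (2*pi*real i * real a / real N)
          + - (\<i> * complex_of_real (2*pi*real i * real b / real N)))"
    unfolding fourier_phase_def exp_cnj exp_add by simp
  also have "\<i> * complex_of_real (2*pi*real i * real a / real N)
      + - (\<i> * complex_of_real (2*pi*real i * real b / real N))
      = \<i> * complex_of_real (real i * (2*pi*real_of_int (int a - int b) / real N))"
    by (simp add: algebra_simps diff_divide_distrib)
  finally show ?thesis
    by (simp only: exp_ii_power)
qed

lemma fourier_phase_orthogonal:
  assumes "a < N" "b < N"
  shows "(\<Sum>i=1..N. fourier_phase N i a * cnj (fourier_phase N i b)) = (if a = b then of_nat N else 0)"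
proof (cases "a = b")
  case True
  have "fourier_phase N i a * cnj (fourier_phase N i a) = 1" for i
    using of_real_cmod_power2[of "fourier_phase N i a"] by (simp add: cmod_fourier_phase)
  with True show ?thesis
    by simp
next
  case False
  have "\<not> int N dvd int a - int b"
  proof
    assume "int N dvd int a - int b"
    hence "\<bar>int N\<bar> \<le> \<bar>int a - int b\<bar>"
      using False by (intro dvd_imp_le_int) auto
    with assms show False
      by linarith
  qed
  moreover have "0 < N"
    using assms by simp
  ultimately show ?thesis
    using sum_root_of_unity_powers_eq_0 False by (simp add: fourier_phase_mult_cnj del: of_int_diff)
qed

subsection \<open>Harmonic frames\<close>

text \<open>Coordinate \<open>j\<close> of the frame vectors is taken from column \<open>e j\<close> of the normalised
  \<open>N \<times> N\<close> Fourier matrix.\<close>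

definition harmonic_frame :: "nat \<Rightarrow> ('n::finite \<Rightarrow> nat) \<Rightarrow> nat \<Rightarrow> complex^'n" where
  "harmonic_frame N e i = (\<chi> j. complex_of_real (1 / sqrt (real N)) * fourier_phase N i (e j))"

lemma harmonic_frame_is_dual:
  fixes e :: "'n::finite \<Rightarrow> nat"
  assumes inj: "inj e" and lt: "\<And>j. e j < N"
  shows "is_dual N (harmonic_frame N e) (harmonic_frame N e)"
  unfolding is_dual_def
proof (intro allI iffD2[OF vec_eq_iff] allI)
  fix f :: "complex^'n" and k
  let ?H = "harmonic_frame N e"
  have N: "0 < N"
    using lt[of undefined] by simp
  have entries: "cnj (?H i $ j) * ?H i $ k
      = complex_of_real (1 / real N) * (fourier_phase N i (e k) * cnj (fourier_phase N i (e j)))"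
    for i j
  proof -
    have "complex_of_real (1 / sqrt (real N)) * complex_of_real (1 / sqrt (real N))
        = complex_of_real (1 / real N)"
      unfolding of_real_mult[symmetric] using N by (simp add: real_sqrt_mult[symmetric])
    thus ?thesis
      unfolding harmonic_frame_def by (simp add: algebra_simps)
  qed
  have "(\<Sum>i=1..N. cinner f (?H i) *s ?H i) $ k
      = (\<Sum>i=1..N. \<Sum>j\<in>UNIV. f$j * (cnj (?H i $ j) * ?H i $ k))"
    by (simp add: sum_component cinner_def sum_distrib_left mult_ac)
  also have "\<dots> = (\<Sum>j\<in>UNIV. \<Sum>i=1..N. f$j * (complex_of_real (1 / real N) *
      (fourier_phase N i (e k) * cnj (fourier_phase N i (e j)))))"
    by (subst sum.swap) (simp only: entries)
  also have "\<dots> = (\<Sum>j\<in>UNIV. f$j * complex_of_real (1 / real N) *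
      (\<Sum>i=1..N. fourier_phase N i (e k) * cnj (fourier_phase N i (e j))))"
    by (simp add: sum_distrib_left mult_ac)
  also have "\<dots> = (\<Sum>j\<in>UNIV. if j = k then f$k else 0)"
    using fourier_phase_orthogonal[OF lt lt] inj N by (intro sum.cong) (auto simp: inj_eq)
  finally show "f $ k = (\<Sum>i=1..N. cinner f (?H i) *s ?H i) $ k"
    by simp
qed

lemma hnorm_harmonic_frame_power2:
  fixes e :: "'n::finite \<Rightarrow> nat"
  assumes "0 < N"
  shows "(hnorm (harmonic_frame N e i))^2 = real CARD('n) / real N"
proof -
  have "(cmod (harmonic_frame N e i $ j))^2 = 1 / real N" for j :: 'n
    using assms by (simp add: harmonic_frame_def norm_mult norm_divide cmod_fourier_phase power_divide)
  thus ?thesis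
    by (simp add: hnorm_power2)
qed

lemma eps1_pair_harmonic_frame:
  fixes e :: "'n::finite \<Rightarrow> nat"
  assumes "0 < N"
  shows "eps1_pair N (harmonic_frame N e) (harmonic_frame N e) = real CARD('n) / real N"
proof -
  have "frob_norm (err_op (harmonic_frame N e) (harmonic_frame N e) {i}) = real CARD('n) / real N"
    for i
    using hnorm_harmonic_frame_power2[OF assms, of e i]
    by (simp add: frob_norm_err_op_singleton power2_eq_square)
  thus ?thesis
    unfolding eps1_pair_def using assms by (simp add: image_constant_conv)
qed

lemma exists_harmonic_frame:
  assumes "CARD('n::finite) \<le> N"
  obtains F :: "nat \<Rightarrow> complex^'n"
  where "dual_pair N F F" "eps1_pair N F F = real CARD('n) / real N"
proof -
  obtain e :: "'n \<Rightarrow> nat" where e: "bij_betw e UNIV {0..<CARD('n)}"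
    using ex_bij_betw_finite_nat[of "UNIV :: 'n set"] by auto
  have lt: "e j < N" for j
  proof -
    have "e j \<in> {0..<CARD('n)}"
      using bij_betw_apply[OF e] by simp
    thus ?thesis
      using assms by simp
  qed
  hence "0 < N"
    by (metis gr0I not_less_zero)
  with e lt show ?thesis
    using that self_dual_imp_dual_pair harmonic_frame_is_dual eps1_pair_harmonic_frame
    by (metis bij_betw_def)
qed

lemma eps1_pair_nonneg:
  assumes "dual_pair N (F :: nat \<Rightarrow> complex^'n::finite) G"
  shows "0 \<le> eps1_pair N F G"
proof -
  have "1 \<in> {1..N}"
    using dual_pos[of N F G] assms unfolding dual_pair_def by (simp add: Suc_leI)
  thus ?thesis
    using cmod_cinner_le_eps1_pair[of 1 N F G] norm_ge_zero order_trans by blast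
qed

lemma eps1_le:
  assumes "CARD('n::finite) \<le> N"
  shows "eps1 N TYPE('n) \<le> real CARD('n) / real N"
proof -
  obtain F :: "nat \<Rightarrow> complex^'n"
    where F: "dual_pair N F F" "eps1_pair N F F = real CARD('n) / real N"
    using exists_harmonic_frame[OF assms] .
  have bdd: "bdd_below {eps1_pair N F G | F (G :: nat \<Rightarrow> complex^'n). dual_pair N F G}"
    using eps1_pair_nonneg by (intro bdd_belowI[of _ 0]) blast
  show ?thesis
    unfolding eps1_def F(2)[symmetric] by (rule cInf_lower[OF _ bdd]) (use F(1) in blast)
qed

theorem corollary3p4:
  fixes F G :: "nat \<Rightarrow> complex^'n::finite" and N :: nat
  assumes "(F, G) \<in> optF1 N TYPE('n)"
  shows "uniform1 N F G \<and> (\<forall>i\<in>{1..N}. cinner (F i) (G i) = of_nat CARD('n) / of_nat N)"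
proof -
  have dual: "is_dual N F G" and opt: "eps1_pair N F G = eps1 N TYPE('n)"
    using assms unfolding optF1_def dual_pair_def by auto
  have "eps1 N TYPE('n) \<le> real CARD('n) / real N"
    using eps1_le dual_card_le[OF dual] .
  hence bound: "cmod (cinner (F i) (G i)) \<le> real CARD('n) / real N" if "i \<in> {1..N}" for i
    using cmod_cinner_le_eps1_pair[OF that, of F G] opt by linarith
  have "(\<Sum>i\<in>{1..N}. cinner (F i) (G i)) = of_real (real (card {1..N}) * (real CARD('n) / real N))"
    using dual_sum_cinner[OF dual] dual_pos[OF dual] by simp
  hence "cinner (F i) (G i) = of_nat CARD('n) / of_nat N" if "i \<in> {1..N}" for i
    using eq_of_sum_eq_card_mult_bound[OF _ _ bound that] by simp
  thus ?thesis
    unfolding uniform1_def by simp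
qed

end
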